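(* For $\lambda>0$ let $m(\lambda):=\big|\{(t,x)\in(0,\infty)\times\mathbb{R}^3:u_{\mathrm{lin}}(t,x)>\lambda\}\big|$ (Lebesgue measure). Then $$m(\lambda)=\frac{4\pi}{3}\left(\frac{1}{2\lambda^3}-\frac{2}{(\lambda+2)^3}\right)1_{(0,2)}(\lambda).$$
   Context: Let $f(s):=\max\{1-|s|,0\}$ and define, with $r=|x|$, $u_{\mathrm{lin}}(t,x):=\dfrac{f(r-t)-f(r+t)}{r}$ on $\mathbb{R}\times\mathbb{R}^3$; this is a radial solution of the linear wave equation on $\mathbb{R}\times\mathbb{R}^3$ with initial data $u_{\mathrm{lin}}(0,x)=0$, $\partial_tu_{\mathrm{lin}}(0,x)=\frac{2}{|x|}1_{\{0<|x|\le1\}}$. *)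

theory Defs
  imports "HOL-Analysis.Analysis"
begin

definition tent :: "real \<Rightarrow> real" where
  "tent s = max (1 - \<bar>s\<bar>) 0"

text \<open>u_lin(t,x) = (f(r-t) - f(r+t))/r with r = |x|, x in R^3.
  At x = 0 the formula involves division by zero (Isabelle: value 0); this is a null set.\<close>
definition u_lin :: "real \<Rightarrow> real^3 \<Rightarrow> real" where
  "u_lin t x = (tent (norm x - t) - tent (norm x + t)) / norm x"

end

theory Submission
  imports Defs
begin

(* For r = |x| > 0 and t \<ge> 0 one has tent (r - t) - tent (r + t) = max 0 (min (2 min r t) (1 - |r - t|)),
   so u_lin(t, x) > lam holds exactly for t in an open interval whose length
   min (1 + r - 3 lam r / 2) (2 - 2 lam r) depends only on r (and which is empty for lam \<ge> 2).
   Slicing at fixed x and integrating in polar coordinates, the measure becomes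
   4 pi times the integral of r^2 times this length over [0, 1/lam], a piecewise
   polynomial with a single break at r = 2 / (lam + 2). *)

definition sphere_area :: "nat \<Rightarrow> real \<Rightarrow> real" where
  "sphere_area n r = n * unit_ball_vol n * r ^ (n - 1)"

lemma sphere_area_3: "sphere_area 3 r = 4 * pi * r^2"
  by (simp add: sphere_area_def unit_ball_vol_3)

lemma has_integral_sphere_area:
  assumes "0 < n" "0 \<le> a"
  shows "(sphere_area n has_integral unit_ball_vol n * a ^ n) {0..a}"
proof -
  have "(sphere_area n has_integral unit_ball_vol n * a ^ n - unit_ball_vol n * 0 ^ n) {0..a}"
    unfolding sphere_area_def
    by (intro fundamental_theorem_of_calculus assms ballI)
       (auto simp: has_real_derivative_iff_has_vector_derivative[symmetric] intro!: derivative_eq_intros)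
  then show ?thesis using assms(1) by (simp add: power_0_left)
qed

lemma borel_measurable_sphere_area [measurable]: "sphere_area n \<in> borel_measurable borel"
  unfolding sphere_area_def by measurable

lemma emeasure_norm_atMost:
  "emeasure (lborel :: 'a::euclidean_space measure) {x. norm x \<le> a}
     = ennreal (unit_ball_vol DIM('a) * a ^ DIM('a)) * indicator {0..} a"
proof (cases "0 \<le> a")
  case True
  then have "{x::'a. norm x \<le> a} = cball 0 a" by (auto simp: dist_norm)
  then show ?thesis using True by (simp add: emeasure_cball)
next
  case False
  then have "{x::'a. norm x \<le> a} = {}" by (auto intro: order.trans[OF norm_ge_zero])
  then show ?thesis using False by simp
qed

lemma distr_norm_lborel:
  "distr (lborel :: 'a::euclidean_space measure) borel norm
     = density lborel (\<lambda>r. ennreal (sphere_area DIM('a) r) * indicator {0..} r)"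
  (is "?N = density lborel ?g")
proof (rule measure_eqI_generator_eq[where E = "range atMost" and \<Omega> = UNIV and A = "\<lambda>n. {..real n}"])
  have N_atMost: "emeasure ?N {..a} = ennreal (unit_ball_vol DIM('a) * a ^ DIM('a)) * indicator {0..} a"
    for a :: real
    by (simp add: emeasure_distr vimage_def emeasure_norm_atMost)
  show "emeasure ?N X = emeasure (density lborel ?g) X" if "X \<in> range atMost" for X
  proof -
    obtain a where X: "X = {..a}" using \<open>X \<in> range atMost\<close> by blast
    have "emeasure (density lborel ?g) {..a}
        = (\<integral>\<^sup>+r. ennreal (sphere_area DIM('a) r) * indicator {0..a} r \<partial>lborel)"
      by (subst emeasure_density) (auto intro!: nn_integral_cong simp: indicator_def)
    also have "\<dots> = ennreal (unit_ball_vol DIM('a) * a ^ DIM('a)) * indicator {0..} a"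
    proof (cases "0 \<le> a")
      case True
      have "(\<integral>\<^sup>+r. ennreal (sphere_area DIM('a) r) * indicator {0..a} r \<partial>lborel)
          = ennreal (unit_ball_vol DIM('a) * a ^ DIM('a))"
        by (rule nn_integral_has_integral_lebesgue'[OF _ has_integral_sphere_area[OF DIM_positive True]])
           (simp add: sphere_area_def)
      then show ?thesis using True by simp
    qed simp
    finally show ?thesis using N_atMost X by simp
  qed
  show "sets ?N = sigma_sets UNIV (range atMost)"
    "sets (density lborel ?g) = sigma_sets UNIV (range (atMost :: real \<Rightarrow> real set))"
    by (simp_all add: borel_eq_atMost)
  show "emeasure ?N {..real n} \<noteq> \<infinity>" for n
    by (simp add: N_atMost indicator_def)
qed (auto simp: Int_stable_def real_arch_simple)

lemma nn_integral_radial: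
  fixes f :: "real \<Rightarrow> ennreal"
  assumes [measurable]: "f \<in> borel_measurable borel"
  shows "(\<integral>\<^sup>+x. f (norm x) \<partial>(lborel :: 'a::euclidean_space measure))
    = (\<integral>\<^sup>+r. ennreal (sphere_area DIM('a) r) * indicator {0..} r * f r \<partial>lborel)"
proof -
  have "(\<integral>\<^sup>+x. f (norm x) \<partial>(lborel :: 'a measure)) = (\<integral>\<^sup>+r. f r \<partial>distr (lborel :: 'a measure) borel norm)"
    by (simp add: nn_integral_distr)
  also have "\<dots> = (\<integral>\<^sup>+r. f r \<partial>density lborel (\<lambda>r. ennreal (sphere_area DIM('a) r) * indicator {0..} r))"
    by (simp only: distr_norm_lborel)
  finally show ?thesis by (simp add: nn_integral_density)
qed

lemma has_integral_antiderivative: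
  fixes F f g :: "real \<Rightarrow> real"
  assumes "a \<le> b" "\<And>x. (F has_real_derivative f x) (at x)" "\<And>x. x \<in> {a..b} \<Longrightarrow> g x = f x"
  shows "(g has_integral F b - F a) {a..b}"
proof -
  have "(f has_integral F b - F a) {a..b}"
    using assms(1,2) by (intro fundamental_theorem_of_calculus)
      (auto simp: has_real_derivative_iff_has_vector_derivative[symmetric] intro: has_field_derivative_at_within)
  then show ?thesis using has_integral_cong[of "{a..b}" g f] assms(3) by blast
qed

lemma tent_diff_eq:
  fixes r t :: real
  assumes "0 \<le> r" "0 \<le> t"
  shows "tent (r - t) - tent (r + t) = max 0 (min (2 * min r t) (1 - \<bar>r - t\<bar>))"
  using assms by (auto simp: tent_def)

lemma less_u_lin_iff:
  assumes "0 < lam"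
  shows "0 < t \<and> lam < u_lin t x \<longleftrightarrow> x \<noteq> 0 \<and> lam < 2 \<and>
    max (lam * norm x / 2) ((lam + 1) * norm x - 1) < t \<and> t < 1 - (lam - 1) * norm x"
proof (cases "x = 0")
  case True
  then show ?thesis using assms by (simp add: u_lin_def)
next
  case False
  define r where "r = norm x"
  have r: "0 < r" using False by (simp add: r_def)
  have lam_r: "0 < lam * r" "lam * r < 2 * r \<longleftrightarrow> lam < 2" using assms r by auto
  have "0 < t \<and> lam < u_lin t x \<longleftrightarrow> 0 < t \<and> lam * r < max 0 (min (2 * min r t) (1 - \<bar>r - t\<bar>))"
    using r tent_diff_eq[of r t] by (auto simp: u_lin_def r_def less_divide_eq)
  also have "\<dots> \<longleftrightarrow> lam < 2 \<and> max (lam * r / 2) ((lam + 1) * r - 1) < t \<and> t < 1 - (lam - 1) * r"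
    using lam_r by (auto simp: algebra_simps)
  finally show ?thesis using False by (simp add: r_def)
qed

definition exceedance_time :: "real \<Rightarrow> real \<Rightarrow> real" where
  "exceedance_time lam r = min (1 + r - 3 * lam * r / 2) (2 - 2 * lam * r)"

lemma emeasure_u_lin_time_section:
  assumes "0 < lam" "lam < 2"
  shows "emeasure lborel {t. 0 < t \<and> lam < u_lin t x}
    = ennreal (exceedance_time lam (norm x)) * indicator {0<..} (norm x)"
proof (cases "x = 0")
  case True
  then show ?thesis using less_u_lin_iff[OF assms(1)] by simp
next
  case False
  let ?lo = "max (lam * norm x / 2) ((lam + 1) * norm x - 1)" and ?hi = "1 - (lam - 1) * norm x"
  have "{t. 0 < t \<and> lam < u_lin t x} = {?lo<..<?hi}"
    using less_u_lin_iff[OF assms(1)] False assms(2) by auto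
  moreover have "?hi - ?lo = exceedance_time lam (norm x)"
    by (simp add: exceedance_time_def algebra_simps min_def max_def)
  moreover have "emeasure lborel {a<..<b} = ennreal (b - a)" for a b :: real
    by (cases "a \<le> b") (simp_all add: ennreal_neg)
  ultimately show ?thesis using False by simp
qed

lemma exceedance_time_nonneg:
  assumes "lam < 2" "0 \<le> r" "lam * r \<le> 1"
  shows "0 \<le> exceedance_time lam r"
proof -
  have "0 \<le> (2 - lam) * r" using assms by simp
  then show ?thesis using assms(3) by (simp add: exceedance_time_def algebra_simps)
qed

lemma exceedance_time_has_integral:
  assumes "0 < lam" "lam < 2"
  shows "((\<lambda>r. r^2 * exceedance_time lam r) has_integral 1 / (6 * lam^3) - 2 / (3 * (lam + 2)^3))
           {0..1/lam}"
proof -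
  define a where "a = 2 / (lam + 2)"
  define F1 where "F1 r = r^3 / 3 + (2 - 3 * lam) * r^4 / 8" for r :: real
  define F2 where "F2 r = 2 * r^3 / 3 - lam * r^4 / 2" for r :: real
  have a: "0 \<le> a" "a \<le> 1 / lam" using assms by (simp_all add: a_def field_simps)
  have "(F1 has_real_derivative r^2 * (1 + r - 3 * lam * r / 2)) (at r)" for r
    unfolding F1_def by (auto intro!: derivative_eq_intros simp: field_simps eval_nat_numeral)
  moreover have "r^2 * exceedance_time lam r = r^2 * (1 + r - 3 * lam * r / 2)" if "r \<in> {0..a}" for r
  proof -
    have "(lam + 2) * r \<le> 2" using that assms by (simp add: a_def field_simps)
    then show ?thesis by (simp add: exceedance_time_def algebra_simps)
  qed
  ultimately have I1: "((\<lambda>r. r^2 * exceedance_time lam r) has_integral F1 a - F1 0) {0..a}"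
    using a by (intro has_integral_antiderivative)
  have "(F2 has_real_derivative r^2 * (2 - 2 * lam * r)) (at r)" for r
    unfolding F2_def by (auto intro!: derivative_eq_intros simp: field_simps eval_nat_numeral)
  moreover have "r^2 * exceedance_time lam r = r^2 * (2 - 2 * lam * r)" if "r \<in> {a..1/lam}" for r
  proof -
    have "2 \<le> (lam + 2) * r" using that assms by (simp add: a_def field_simps)
    then show ?thesis by (simp add: exceedance_time_def algebra_simps)
  qed
  ultimately have I2: "((\<lambda>r. r^2 * exceedance_time lam r) has_integral F2 (1/lam) - F2 a) {a..1/lam}"
    using a by (intro has_integral_antiderivative)
  have "F1 a - F1 0 - F2 a = a^3 * (a * (lam + 2)) / 8 - a^3 / 3"
    by (simp add: F1_def F2_def field_simps eval_nat_numeral)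
  also have "a * (lam + 2) = 2" using assms by (simp add: a_def field_simps)
  finally have "F1 a - F1 0 - F2 a = - (a^3 / 12)" by simp
  moreover have "F2 (1/lam) = 1 / (6 * lam^3)"
    using assms by (simp add: F2_def field_simps eval_nat_numeral)
  moreover have "a^3 / 12 = 2 / (3 * (lam + 2)^3)"
    by (simp add: a_def power_divide)
  ultimately have "F1 a - F1 0 + (F2 (1/lam) - F2 a) = 1 / (6 * lam^3) - 2 / (3 * (lam + 2)^3)"
    by simp
  with has_integral_combine[OF a I1 I2] show ?thesis by simp
qed

lemma nn_integral_exceedance_time:
  assumes "0 < lam" "lam < 2"
  shows "(\<integral>\<^sup>+r. ennreal (4 * pi * r^2) * indicator {0..} r
            * (ennreal (exceedance_time lam r) * indicator {0<..} r) \<partial>lborel)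
    = ennreal (4 * pi * (1 / (6 * lam^3) - 2 / (3 * (lam + 2)^3)))"
proof -
  have pointwise: "ennreal (4 * pi * r^2) * indicator {0..} r * (ennreal (exceedance_time lam r) * indicator {0<..} r)
      = ennreal (4 * pi * (r^2 * exceedance_time lam r)) * indicator {0..1/lam} r" for r
  proof -
    consider "r \<le> 0" | "0 < r" "r \<le> 1 / lam" | "1 / lam < r" by linarith
    then show ?thesis
    proof cases
      case 1
      then show ?thesis by (cases "r = 0") (simp_all add: indicator_def)
    next
      case 2
      then have "lam * r \<le> 1" using assms(1) by (simp add: field_simps)
      then show ?thesis using 2 exceedance_time_nonneg[OF assms(2)] by (simp add: ennreal_mult[symmetric])
    next
      case 3
      then have "exceedance_time lam r < 0" using assms(1) by (simp add: field_simps exceedance_time_def)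
      moreover have "0 < 1 / lam" using assms by simp
      ultimately show ?thesis using 3 by (simp add: ennreal_neg)
    qed
  qed
  have nonneg: "0 \<le> 4 * pi * (r^2 * exceedance_time lam r)" if "r \<in> {0..1/lam}" for r
    using that assms exceedance_time_nonneg[OF assms(2), of r] by (simp add: field_simps)
  show ?thesis
    unfolding pointwise
    by (rule nn_integral_has_integral_lebesgue'[OF nonneg
          has_integral_mult_right[OF exceedance_time_has_integral[OF assms]]])
qed

theorem lemma3p1:
  fixes lam :: real
  assumes "lam > 0"
  shows "emeasure lborel {p :: real \<times> (real^3). fst p > 0 \<and> u_lin (fst p) (snd p) > lam}
    = ennreal (4 * pi / 3 * (1 / (2 * lam ^ 3) - 2 / (lam + 2) ^ 3) * indicator {0<..<2} lam)"
  (is "emeasure lborel ?S = _")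
proof (cases "lam < 2")
  case False
  then have empty: "?S = {}" using less_u_lin_iff[OF assms] by auto
  show ?thesis using False by (simp add: empty)
next
  case True
  have "Measurable.pred (lborel \<Otimes>\<^sub>M lborel) (\<lambda>p::real \<times> (real^3). 0 < fst p \<and> lam < u_lin (fst p) (snd p))"
    unfolding u_lin_def tent_def by measurable
  then have S: "?S \<in> sets (lborel \<Otimes>\<^sub>M lborel)" by (simp add: pred_def space_pair_measure)
  have [measurable]: "exceedance_time lam \<in> borel_measurable borel"
    unfolding exceedance_time_def by measurable
  have "emeasure lborel ?S = (\<integral>\<^sup>+x. emeasure lborel ((\<lambda>t. (t, x)) -` ?S) \<partial>lborel)"
    using lborel_pair.emeasure_pair_measure_alt2[OF S] by (simp add: lborel_prod)
  also have "\<dots> = (\<integral>\<^sup>+(x::real^3). ennreal (exceedance_time lam (norm x)) * indicator {0<..} (norm x) \<partial>lborel)"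
    using emeasure_u_lin_time_section[OF assms True] by (simp add: vimage_def)
  also have "\<dots> = (\<integral>\<^sup>+r. ennreal (4 * pi * r^2) * indicator {0..} r
                         * (ennreal (exceedance_time lam r) * indicator {0<..} r) \<partial>lborel)"
    by (subst nn_integral_radial) (measurable, simp add: sphere_area_3)
  also have "\<dots> = ennreal (4 * pi * (1 / (6 * lam^3) - 2 / (3 * (lam + 2)^3)))"
    by (rule nn_integral_exceedance_time[OF assms True])
  finally show ?thesis using assms True by (simp add: field_simps)
qed

end
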